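(* Let $\mathsf{K}$ be one of $\mathsf{PSL}$, $\mathsf{ISL}$, $\mathsf{bISL}$, $\mathsf{PDL}$, $\mathsf{IL}$, $\mathsf{HA}$, and let $\mathsf{K}^\partial$ be the associated class of partial maps between posets (defined in the context). For every $\boldsymbol{A},\boldsymbol{B}\in\mathsf{K}$ and all posets $\mathbb{X},\mathbb{Y}$: (i) if $f\colon \boldsymbol{A}\to\boldsymbol{B}$ is a homomorphism, then $f_\ast\colon \boldsymbol{B}_\ast \rightharpoonup \boldsymbol{A}_\ast$ belongs to $\mathsf{K}^\partial$; (ii) if $p\colon\mathbb{X}\rightharpoonup\mathbb{Y}$ belongs to $\mathsf{K}^\partial$, then $\mathsf{Up}_{\mathsf{K}}(p)\colon \mathsf{Up}_{\mathsf{K}}(\mathbb{Y})\to\mathsf{Up}_{\mathsf{K}}(\mathbb{X})$ is a homomorphism. Furthermore, if $f$ is injective then $f_\ast$ is surjective, and if $p$ is surjective then $\mathsf{Up}_{\mathsf{K}}(p)$ is injective.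
   Context: Varieties: $\mathsf{PSL}$ = algebras $\langle A;\land,\lnot,0,1\rangle$ with $\langle A;\land\rangle$ a semilattice (order $a\le b$ iff $a\land b=a$) with minimum $0$, maximum $1$, and $c\land a=0\iff c\le\lnot a$; $\mathsf{ISL}$ = algebras $\langle A;\land,\to,1\rangle$, semilattice with maximum $1$ and $c\land a\le b\iff c\le a\to b$; $\mathsf{bISL}$ = $\langle A;\land,\to,0,1\rangle$ with $\langle A;\land,\to,1\rangle\in\mathsf{ISL}$ and $0$ the minimum; $\mathsf{PDL}$ = $\langle A;\land,\lor,\lnot,0,1\rangle$, distributive lattices whose $\langle\land,\lnot,0,1\rangle$-reduct is in $\mathsf{PSL}$; $\mathsf{IL}$ = $\langle A;\land,\lor,\to,1\rangle$, lattices whose $\langle\land,\to,1\rangle$-reduct is in $\mathsf{ISL}$; $\mathsf{HA}$ = Heyting algebras $\langle A;\land,\lor,\to,0,1\rangle$. For an algebra $\boldsymbol{A}$ in one of these, a filter is a nonempty upset of $\langle A;\le\rangle$ closed under $\land$; it is meet irreducible if it is proper and not the intersection of two filters both different from it; $\boldsymbol{A}_\ast$ is the poset of meet irreducible filters ordered by inclusion. A partial function $p\colon X\rightharpoonup Y$ is a function from a subset $\mathsf{dom}(p)\subseteq X$ to $Y$; it is surjective if its range is $Y$; between posets it is order preserving if $x\le z$ in $\mathsf{dom}(p)$ implies $p(x)\le p(z)$. For posets, ${\uparrow}S,{\downarrow}S$ denote the up/down-closures. An order preserving $p\colon\mathbb{X}\rightharpoonup\mathbb{Y}$ is: a partial negative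 p-morphism if $X={\downarrow}\{x\in X: {\uparrow}x\subseteq\mathsf{dom}(p)\}$ and for all $x\in\mathsf{dom}(p)$, $y\in Y$ with $p(x)\le y$ there is $z\in\mathsf{dom}(p)$ with $x\le z$ and $y\le p(z)$; a partial positive p-morphism if for all $x\in\mathsf{dom}(p)$, $y\in Y$ with $p(x)\le y$ there is $z\in\mathsf{dom}(p)$ with $x\le z$ and $y=p(z)$; a partial p-morphism if both. Dropping "partial" means $p$ is total. $p$ is almost total if $\mathsf{dom}(p)$ is a downset. The classes $\mathsf{K}^\partial$ are: $\mathsf{PSL}^\partial$: partial negative p-morphisms; $\mathsf{ISL}^\partial$: partial positive p-morphisms; $\mathsf{bISL}^\partial$: partial p-morphisms; $\mathsf{PDL}^\partial$: (total) negative p-morphisms; $\mathsf{IL}^\partial$: almost total partial positive p-morphisms; $\mathsf{HA}^\partial$: (total) p-morphisms. For a homomorphism $f\colon\boldsymbol{A}\to\boldsymbol{B}$, $f_\ast\colon\boldsymbol{B}_\ast\rightharpoonup\boldsymbol{A}_\ast$ has domain $\{F\in\boldsymbol{B}_\ast: f^{-1}[F]\in\boldsymbol{A}_\ast\}$ and $f_\ast(F)=f^{-1}[F]$. For a poset $\mathbb{X}$, $\mathsf{Up}_{\mathsf{K}}(\mathbb{X})$ is the reduct to the language of $\mathsf{K}$ of the Heyting algebra $\langle\mathsf{Up}(\mathbb{X});\cap,\cup,\to,\emptyset,X\rangle$ of upsets, where $U\to V = X\smallsetminus{\downarrow}(U\smallsetminus V)$. For $p\colon\mathbb{X}\rightharpoonup\mathbb{Y}$,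 $\mathsf{Up}_{\mathsf{K}}(p)(U) = X\smallsetminus{\downarrow}p^{-1}[Y\smallsetminus U]$. *)

theory Defs
  imports Main
begin

datatype variety = PSL | ISL | bISL | PDL | IL | HA

text \<open>Algebras in the full Heyting signature; an algebra of a variety K only
  uses the operations of the language of K (the other fields are ignored).\<close>
record 'a alg =
  acar :: "'a set"
  ameet :: "'a \<Rightarrow> 'a \<Rightarrow> 'a"
  ajoin :: "'a \<Rightarrow> 'a \<Rightarrow> 'a"
  aneg :: "'a \<Rightarrow> 'a"
  aimp :: "'a \<Rightarrow> 'a \<Rightarrow> 'a"
  abot :: "'a"
  atop :: "'a"

definition has_join :: "variety \<Rightarrow> bool" where
  "has_join K \<longleftrightarrow> K \<in> {PDL, IL, HA}"
definition has_neg :: "variety \<Rightarrow> bool" where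
  "has_neg K \<longleftrightarrow> K \<in> {PSL, PDL}"
definition has_imp :: "variety \<Rightarrow> bool" where
  "has_imp K \<longleftrightarrow> K \<in> {ISL, bISL, IL, HA}"
definition has_bot :: "variety \<Rightarrow> bool" where
  "has_bot K \<longleftrightarrow> K \<in> {PSL, bISL, PDL, HA}"

definition ale :: "'a alg \<Rightarrow> 'a \<Rightarrow> 'a \<Rightarrow> bool" where
  "ale A a b \<longleftrightarrow> ameet A a b = a"

definition closed_K :: "variety \<Rightarrow> 'a alg \<Rightarrow> bool" where
  "closed_K K A \<longleftrightarrow>
     atop A \<in> acar A \<and>
     (\<forall>a\<in>acar A. \<forall>b\<in>acar A. ameet A a b \<in> acar A) \<and>
     (has_join K \<longrightarrow> (\<forall>a\<in>acar A. \<forall>b\<in>acar A. ajoin A a b \<in> acar A)) \<and>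
     (has_imp K \<longrightarrow> (\<forall>a\<in>acar A. \<forall>b\<in>acar A. aimp A a b \<in> acar A)) \<and>
     (has_neg K \<longrightarrow> (\<forall>a\<in>acar A. aneg A a \<in> acar A)) \<and>
     (has_bot K \<longrightarrow> abot A \<in> acar A)"

definition semilattice_alg :: "'a alg \<Rightarrow> bool" where
  "semilattice_alg A \<longleftrightarrow>
     (\<forall>a\<in>acar A. ameet A a a = a) \<and>
     (\<forall>a\<in>acar A. \<forall>b\<in>acar A. ameet A a b = ameet A b a) \<and>
     (\<forall>a\<in>acar A. \<forall>b\<in>acar A. \<forall>c\<in>acar A. ameet A (ameet A a b) c = ameet A a (ameet A b c))"

definition lattice_alg :: "'a alg \<Rightarrow> bool" where
  "lattice_alg A \<longleftrightarrow> semilattice_alg A \<and>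
     (\<forall>a\<in>acar A. \<forall>b\<in>acar A. ajoin A a b = ajoin A b a) \<and>
     (\<forall>a\<in>acar A. \<forall>b\<in>acar A. \<forall>c\<in>acar A. ajoin A (ajoin A a b) c = ajoin A a (ajoin A b c)) \<and>
     (\<forall>a\<in>acar A. \<forall>b\<in>acar A. ameet A a (ajoin A a b) = a) \<and>
     (\<forall>a\<in>acar A. \<forall>b\<in>acar A. ajoin A a (ameet A a b) = a)"

definition distributive_alg :: "'a alg \<Rightarrow> bool" where
  "distributive_alg A \<longleftrightarrow>
     (\<forall>a\<in>acar A. \<forall>b\<in>acar A. \<forall>c\<in>acar A.
        ameet A a (ajoin A b c) = ajoin A (ameet A a b) (ameet A a c))"

text \<open>Membership of an algebra in the variety K (as in the context):
  PSL: semilattice with min 0, max 1 and pseudocomplement law;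
  ISL: semilattice with max 1 and residuation;  bISL: ISL with minimum 0;
  PDL: distributive lattice with PSL-reduct;  IL: lattice with ISL-reduct;
  HA: lattice with bISL-reduct (= Heyting algebra).\<close>
definition in_K :: "variety \<Rightarrow> 'a alg \<Rightarrow> bool" where
  "in_K K A \<longleftrightarrow> closed_K K A \<and> semilattice_alg A \<and>
     (\<forall>a\<in>acar A. ale A a (atop A)) \<and>
     (has_bot K \<longrightarrow> (\<forall>a\<in>acar A. ale A (abot A) a)) \<and>
     (has_neg K \<longrightarrow> (\<forall>a\<in>acar A. \<forall>c\<in>acar A.
         ameet A c a = abot A \<longleftrightarrow> ale A c (aneg A a))) \<and>
     (has_imp K \<longrightarrow> (\<forall>a\<in>acar A. \<forall>b\<in>acar A. \<forall>c\<in>acar A.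
         ale A (ameet A c a) b \<longleftrightarrow> ale A c (aimp A a b))) \<and>
     (has_join K \<longrightarrow> lattice_alg A) \<and>
     (K = PDL \<longrightarrow> distributive_alg A)"

definition hom_K :: "variety \<Rightarrow> 'a alg \<Rightarrow> 'b alg \<Rightarrow> ('a \<Rightarrow> 'b) \<Rightarrow> bool" where
  "hom_K K A B f \<longleftrightarrow>
     (\<forall>a\<in>acar A. f a \<in> acar B) \<and>
     f (atop A) = atop B \<and>
     (\<forall>a\<in>acar A. \<forall>b\<in>acar A. f (ameet A a b) = ameet B (f a) (f b)) \<and>
     (has_join K \<longrightarrow> (\<forall>a\<in>acar A. \<forall>b\<in>acar A. f (ajoin A a b) = ajoin B (f a) (f b))) \<and>
     (has_imp K \<longrightarrow> (\<forall>a\<in>acar A. \<forall>b\<in>acar A. f (aimp A a b) = aimp B (f a) (f b))) \<and>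
     (has_neg K \<longrightarrow> (\<forall>a\<in>acar A. f (aneg A a) = aneg B (f a))) \<and>
     (has_bot K \<longrightarrow> f (abot A) = abot B)"

definition is_filter :: "'a alg \<Rightarrow> 'a set \<Rightarrow> bool" where
  "is_filter A F \<longleftrightarrow> F \<subseteq> acar A \<and> F \<noteq> {} \<and>
     (\<forall>a\<in>F. \<forall>b\<in>acar A. ale A a b \<longrightarrow> b \<in> F) \<and>
     (\<forall>a\<in>F. \<forall>b\<in>F. ameet A a b \<in> F)"

definition mi_filter :: "'a alg \<Rightarrow> 'a set \<Rightarrow> bool" where
  "mi_filter A F \<longleftrightarrow> is_filter A F \<and> F \<noteq> acar A \<and>
     (\<forall>G H. is_filter A G \<and> is_filter A H \<and> F = G \<inter> H \<longrightarrow> G = F \<or> H = F)"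

text \<open>The carrier of \<open>A\<^sub>*\<close>; it is ordered by inclusion.\<close>
definition dual_set :: "'a alg \<Rightarrow> 'a set set" where
  "dual_set A = {F. mi_filter A F}"

definition preimg :: "'a alg \<Rightarrow> ('a \<Rightarrow> 'b) \<Rightarrow> 'b set \<Rightarrow> 'a set" where
  "preimg A f F = {a \<in> acar A. f a \<in> F}"

definition fstar :: "'a alg \<Rightarrow> 'b alg \<Rightarrow> ('a \<Rightarrow> 'b) \<Rightarrow> 'b set \<Rightarrow> 'a set option" where
  "fstar A B f F = (if F \<in> dual_set B \<and> preimg A f F \<in> dual_set A
                    then Some (preimg A f F) else None)"

definition poset :: "'x set \<Rightarrow> ('x \<Rightarrow> 'x \<Rightarrow> bool) \<Rightarrow> bool" where
  "poset X le \<longleftrightarrow> (\<forall>x\<in>X. le x x) \<and>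
     (\<forall>x\<in>X. \<forall>y\<in>X. le x y \<and> le y x \<longrightarrow> x = y) \<and>
     (\<forall>x\<in>X. \<forall>y\<in>X. \<forall>z\<in>X. le x y \<and> le y z \<longrightarrow> le x z)"

definition upcl :: "'x set \<Rightarrow> ('x \<Rightarrow> 'x \<Rightarrow> bool) \<Rightarrow> 'x set \<Rightarrow> 'x set" where
  "upcl X le S = {x \<in> X. \<exists>s\<in>S. le s x}"

definition downcl :: "'x set \<Rightarrow> ('x \<Rightarrow> 'x \<Rightarrow> bool) \<Rightarrow> 'x set \<Rightarrow> 'x set" where
  "downcl X le S = {x \<in> X. \<exists>s\<in>S. le x s}"

definition partial_map :: "'x set \<Rightarrow> 'y set \<Rightarrow> ('x \<rightharpoonup> 'y) \<Rightarrow> bool" where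
  "partial_map X Y p \<longleftrightarrow> dom p \<subseteq> X \<and> ran p \<subseteq> Y"

definition order_pres :: "'x set \<Rightarrow> ('x \<Rightarrow> 'x \<Rightarrow> bool) \<Rightarrow> 'y set \<Rightarrow> ('y \<Rightarrow> 'y \<Rightarrow> bool)
    \<Rightarrow> ('x \<rightharpoonup> 'y) \<Rightarrow> bool" where
  "order_pres X leX Y leY p \<longleftrightarrow> partial_map X Y p \<and>
     (\<forall>x\<in>dom p. \<forall>z\<in>dom p. leX x z \<longrightarrow> leY (the (p x)) (the (p z)))"

definition neg_pmor :: "'x set \<Rightarrow> ('x \<Rightarrow> 'x \<Rightarrow> bool) \<Rightarrow> 'y set \<Rightarrow> ('y \<Rightarrow> 'y \<Rightarrow> bool)
    \<Rightarrow> ('x \<rightharpoonup> 'y) \<Rightarrow> bool" where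
  "neg_pmor X leX Y leY p \<longleftrightarrow> order_pres X leX Y leY p \<and>
     X = downcl X leX {x \<in> X. upcl X leX {x} \<subseteq> dom p} \<and>
     (\<forall>x\<in>dom p. \<forall>y\<in>Y. leY (the (p x)) y \<longrightarrow>
        (\<exists>z\<in>dom p. leX x z \<and> leY y (the (p z))))"

definition pos_pmor :: "'x set \<Rightarrow> ('x \<Rightarrow> 'x \<Rightarrow> bool) \<Rightarrow> 'y set \<Rightarrow> ('y \<Rightarrow> 'y \<Rightarrow> bool)
    \<Rightarrow> ('x \<rightharpoonup> 'y) \<Rightarrow> bool" where
  "pos_pmor X leX Y leY p \<longleftrightarrow> order_pres X leX Y leY p \<and>
     (\<forall>x\<in>dom p. \<forall>y\<in>Y. leY (the (p x)) y \<longrightarrow>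
        (\<exists>z\<in>dom p. leX x z \<and> y = the (p z)))"

definition total_map :: "'x set \<Rightarrow> ('x \<rightharpoonup> 'y) \<Rightarrow> bool" where
  "total_map X p \<longleftrightarrow> dom p = X"

definition almost_total :: "'x set \<Rightarrow> ('x \<Rightarrow> 'x \<Rightarrow> bool) \<Rightarrow> ('x \<rightharpoonup> 'y) \<Rightarrow> bool" where
  "almost_total X le p \<longleftrightarrow> downcl X le (dom p) \<subseteq> dom p"

definition in_Kdual :: "variety \<Rightarrow> 'x set \<Rightarrow> ('x \<Rightarrow> 'x \<Rightarrow> bool) \<Rightarrow> 'y set \<Rightarrow> ('y \<Rightarrow> 'y \<Rightarrow> bool)
    \<Rightarrow> ('x \<rightharpoonup> 'y) \<Rightarrow> bool" where
  "in_Kdual K X leX Y leY p \<longleftrightarrow>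
     (case K of
        PSL \<Rightarrow> neg_pmor X leX Y leY p
      | ISL \<Rightarrow> pos_pmor X leX Y leY p
      | bISL \<Rightarrow> neg_pmor X leX Y leY p \<and> pos_pmor X leX Y leY p
      | PDL \<Rightarrow> total_map X p \<and> neg_pmor X leX Y leY p
      | IL \<Rightarrow> almost_total X leX p \<and> pos_pmor X leX Y leY p
      | HA \<Rightarrow> total_map X p \<and> neg_pmor X leX Y leY p \<and> pos_pmor X leX Y leY p)"

definition upsets :: "'x set \<Rightarrow> ('x \<Rightarrow> 'x \<Rightarrow> bool) \<Rightarrow> 'x set set" where
  "upsets X le = {U. U \<subseteq> X \<and> upcl X le U \<subseteq> U}"

definition up_imp :: "'x set \<Rightarrow> ('x \<Rightarrow> 'x \<Rightarrow> bool) \<Rightarrow> 'x set \<Rightarrow> 'x set \<Rightarrow> 'x set" where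
  "up_imp X le U V = X - downcl X le (U - V)"

text \<open>The Heyting algebra of upsets; \<open>Up\<^sub>K(X)\<close> is its K-reduct, which is
  exactly what \<open>in_K K\<close> and \<open>hom_K K\<close> look at.\<close>
definition Up_alg :: "'x set \<Rightarrow> ('x \<Rightarrow> 'x \<Rightarrow> bool) \<Rightarrow> 'x set alg" where
  "Up_alg X le = \<lparr> acar = upsets X le, ameet = (\<inter>), ajoin = (\<union>),
     aneg = (\<lambda>U. up_imp X le U {}), aimp = up_imp X le, abot = {}, atop = X \<rparr>"

definition pmap_preimg :: "'x set \<Rightarrow> ('x \<rightharpoonup> 'y) \<Rightarrow> 'y set \<Rightarrow> 'x set" where
  "pmap_preimg X p S = {x \<in> X. \<exists>y\<in>S. p x = Some y}"

definition Up_map :: "'x set \<Rightarrow> ('x \<Rightarrow> 'x \<Rightarrow> bool) \<Rightarrow> 'y set \<Rightarrow> ('x \<rightharpoonup> 'y) \<Rightarrow> 'y set \<Rightarrow> 'x set" where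
  "Up_map X le Y p U = X - downcl X le (pmap_preimg X p (Y - U))"

end

theory Submission
  imports Defs
begin

text \<open>
  (i) Every back condition on \<open>f\<^sub>*\<close> is an extension problem: given \<open>F\<close> and a meet irreducible
  \<open>G \<supseteq> f\<^sup>-\<^sup>1[F]\<close>, extend the filter generated by \<open>F \<union> f[G]\<close>.  With \<open>\<rightarrow>\<close>, residuation shows that
  it still pulls back to \<open>G\<close>, and Zorn's lemma enlarges it to a meet irreducible filter with the
  same preimage; for \<open>F = {1}\<close> and injective \<open>f\<close> this gives surjectivity.  With \<open>0\<close>,
  pseudocomplements show that it is proper, so it extends to a maximal filter; maximal filters
  are those containing \<open>a\<close> or \<open>\<not>a\<close> for every \<open>a\<close>, which is inherited by preimages, so they lie
  in the domain of \<open>f\<^sub>*\<close>.  In the lattice cases meet irreducible filters are prime (residuated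
  lattices being distributive), and proper preimages of prime filters are prime, which gives
  (almost) totality.

  (ii) \<open>Up(p)(U)\<close> consists of the points all of whose defined successors land in \<open>U\<close>.  It
  preserves \<open>1\<close> and \<open>\<inter>\<close> outright, \<open>\<union>\<close> when \<open>dom p\<close> is a downset, \<open>0\<close> and \<open>\<not>\<close> under the negative
  and \<open>\<rightarrow>\<close> under the positive back condition; if \<open>p\<close> is onto, a point separating two upsets is
  separated by any of its preimages.
\<close>

section \<open>Filters of meet semilattices with top\<close>

locale meet_semilattice_alg =
  fixes A :: "'a alg"
  assumes semilattice: "semilattice_alg A"
    and meet_closed: "\<lbrakk>a \<in> acar A; b \<in> acar A\<rbrakk> \<Longrightarrow> ameet A a b \<in> acar A"
    and top_closed: "atop A \<in> acar A"
    and le_top: "a \<in> acar A \<Longrightarrow> ale A a (atop A)"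
begin

lemma meet_idem: "a \<in> acar A \<Longrightarrow> ameet A a a = a"
  using semilattice by (simp add: semilattice_alg_def)

lemma meet_commute: "\<lbrakk>a \<in> acar A; b \<in> acar A\<rbrakk> \<Longrightarrow> ameet A a b = ameet A b a"
  using semilattice by (simp add: semilattice_alg_def)

lemma meet_assoc:
  "\<lbrakk>a \<in> acar A; b \<in> acar A; c \<in> acar A\<rbrakk> \<Longrightarrow> ameet A (ameet A a b) c = ameet A a (ameet A b c)"
  using semilattice by (simp add: semilattice_alg_def)

lemma le_refl: "a \<in> acar A \<Longrightarrow> ale A a a"
  by (simp add: ale_def meet_idem)

lemma le_antisym: "\<lbrakk>a \<in> acar A; b \<in> acar A; ale A a b; ale A b a\<rbrakk> \<Longrightarrow> a = b"
  unfolding ale_def by (metis meet_commute)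

lemma le_trans:
  assumes "a \<in> acar A" "b \<in> acar A" "c \<in> acar A" "ale A a b" "ale A b c"
  shows "ale A a c"
  using assms meet_assoc[of a b c] unfolding ale_def by simp

lemma meet_le1: "\<lbrakk>a \<in> acar A; b \<in> acar A\<rbrakk> \<Longrightarrow> ale A (ameet A a b) a"
  unfolding ale_def by (metis meet_assoc meet_commute meet_idem)

lemma meet_le2: "\<lbrakk>a \<in> acar A; b \<in> acar A\<rbrakk> \<Longrightarrow> ale A (ameet A a b) b"
  unfolding ale_def by (simp add: meet_assoc meet_idem)

lemma le_meetI:
  assumes "a \<in> acar A" "b \<in> acar A" "c \<in> acar A" "ale A c a" "ale A c b"
  shows "ale A c (ameet A a b)"
  using assms meet_assoc[of c a b] unfolding ale_def by simp

lemma meet_mono: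
  assumes "a \<in> acar A" "b \<in> acar A" "a' \<in> acar A" "b' \<in> acar A" "ale A a a'" "ale A b b'"
  shows "ale A (ameet A a b) (ameet A a' b')"
proof -
  have ab: "ameet A a b \<in> acar A" using assms(1,2) by (rule meet_closed)
  have "ale A (ameet A a b) a'" "ale A (ameet A a b) b'"
    using le_trans[OF ab assms(1,3) meet_le1[OF assms(1,2)] assms(5)]
      le_trans[OF ab assms(2,4) meet_le2[OF assms(1,2)] assms(6)] .
  then show ?thesis using le_meetI[OF assms(3,4) ab] by blast
qed

lemma filter_carrier: "is_filter A F \<Longrightarrow> F \<subseteq> acar A"
  unfolding is_filter_def by blast

lemma filter_upward: "\<lbrakk>is_filter A F; a \<in> F; b \<in> acar A; ale A a b\<rbrakk> \<Longrightarrow> b \<in> F"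
  unfolding is_filter_def by blast

lemma filter_meet: "\<lbrakk>is_filter A F; a \<in> F; b \<in> F\<rbrakk> \<Longrightarrow> ameet A a b \<in> F"
  unfolding is_filter_def by blast

lemma filter_top: "is_filter A F \<Longrightarrow> atop A \<in> F"
  unfolding is_filter_def by (meson ex_in_conv subsetD top_closed le_top)

lemma top_filter: "is_filter A {atop A}"
  unfolding is_filter_def
  using top_closed le_top le_antisym meet_idem by auto

end

definition filter_extension :: "'a alg \<Rightarrow> 'a set \<Rightarrow> 'a set \<Rightarrow> 'a set" where
  "filter_extension A F S = {b \<in> acar A. \<exists>x\<in>F. \<exists>y\<in>S. ale A (ameet A x y) b}"

definition maximal_filter :: "'a alg \<Rightarrow> 'a set \<Rightarrow> bool" where
  "maximal_filter A M \<longleftrightarrow> is_filter A M \<and> M \<noteq> acar A \<and>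
     (\<forall>H. is_filter A H \<and> M \<subseteq> H \<and> H \<noteq> acar A \<longrightarrow> H = M)"

lemma maximal_filter_mi_filter:
  assumes "maximal_filter A M"
  shows "mi_filter A M"
  unfolding mi_filter_def
proof (intro conjI allI impI)
  show "is_filter A M" "M \<noteq> acar A" using assms unfolding maximal_filter_def by auto
  have max: "\<And>H. \<lbrakk>is_filter A H; M \<subseteq> H; H \<noteq> acar A\<rbrakk> \<Longrightarrow> H = M"
    using assms unfolding maximal_filter_def by blast
  fix G H assume GH: "is_filter A G \<and> is_filter A H \<and> M = G \<inter> H"
  show "G = M \<or> H = M"
  proof (rule ccontr)
    assume "\<not> (G = M \<or> H = M)"
    then have "G = acar A" "H = acar A" using max GH by auto
    then show False using GH \<open>M \<noteq> acar A\<close> by simp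
  qed
qed

context meet_semilattice_alg
begin

lemma filter_extension_meet:
  assumes F: "is_filter A F" and S: "S \<subseteq> acar A"
    and S_meet: "\<And>a b. \<lbrakk>a \<in> S; b \<in> S\<rbrakk> \<Longrightarrow> ameet A a b \<in> S"
    and a: "a \<in> filter_extension A F S" and b: "b \<in> filter_extension A F S"
  shows "ameet A a b \<in> filter_extension A F S"
proof -
  have F_carrier: "F \<subseteq> acar A" using F by (rule filter_carrier)
  obtain x y where xy: "x \<in> F" "y \<in> S" "ale A (ameet A x y) a" "a \<in> acar A"
    using a unfolding filter_extension_def by blast
  obtain x' y' where xy': "x' \<in> F" "y' \<in> S" "ale A (ameet A x' y') b" "b \<in> acar A"
    using b unfolding filter_extension_def by blast
  have carrier: "x \<in> acar A" "y \<in> acar A" "x' \<in> acar A" "y' \<in> acar A"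
    using xy xy' F_carrier S by auto
  define m where "m = ameet A (ameet A x x') (ameet A y y')"
  have m: "m \<in> acar A" unfolding m_def using carrier by (intro meet_closed)
  have xx': "ameet A x x' \<in> acar A" and yy': "ameet A y y' \<in> acar A"
    using carrier by (auto intro: meet_closed)
  have "ale A m (ameet A x y)" "ale A m (ameet A x' y')"
    unfolding m_def
    using meet_mono[OF xx' yy' carrier(1,2) meet_le1[OF carrier(1,3)] meet_le1[OF carrier(2,4)]]
      meet_mono[OF xx' yy' carrier(3,4) meet_le2[OF carrier(1,3)] meet_le2[OF carrier(2,4)]] .
  moreover have "ameet A x y \<in> acar A" "ameet A x' y' \<in> acar A"
    using carrier by (auto intro: meet_closed)
  ultimately have "ale A m a" "ale A m b"
    using le_trans[OF m _ xy(4)] le_trans[OF m _ xy'(4)] xy(3) xy'(3) by blast+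
  then have "ale A m (ameet A a b)" using le_meetI[OF xy(4) xy'(4) m] by blast
  moreover have "ameet A x x' \<in> F" "ameet A y y' \<in> S"
    using filter_meet[OF F xy(1) xy'(1)] S_meet[OF xy(2) xy'(2)] .
  ultimately show ?thesis
    using meet_closed[OF xy(4) xy'(4)] unfolding filter_extension_def m_def by blast
qed

lemma filter_extension:
  assumes F: "is_filter A F" and S: "S \<subseteq> acar A" "S \<noteq> {}"
    and S_meet: "\<And>a b. \<lbrakk>a \<in> S; b \<in> S\<rbrakk> \<Longrightarrow> ameet A a b \<in> S"
  shows "is_filter A (filter_extension A F S)" "F \<subseteq> filter_extension A F S"
    "S \<subseteq> filter_extension A F S"
proof -
  have F_carrier: "F \<subseteq> acar A" using F by (rule filter_carrier)
  show "F \<subseteq> filter_extension A F S"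
  proof
    fix x assume x: "x \<in> F"
    obtain y where y: "y \<in> S" using S(2) by blast
    have "ale A (ameet A x y) x" using x y S(1) F_carrier by (intro meet_le1) auto
    then show "x \<in> filter_extension A F S"
      using x y F_carrier unfolding filter_extension_def by blast
  qed
  show "S \<subseteq> filter_extension A F S"
  proof
    fix y assume y: "y \<in> S"
    have "ale A (ameet A (atop A) y) y" using y S(1) top_closed by (intro meet_le2) auto
    then show "y \<in> filter_extension A F S"
      using y S(1) filter_top[OF F] unfolding filter_extension_def by blast
  qed
  show "is_filter A (filter_extension A F S)"
    unfolding is_filter_def
  proof (intro conjI ballI impI)
    show "filter_extension A F S \<subseteq> acar A"
      unfolding filter_extension_def by blast
    show "filter_extension A F S \<noteq> {}"
      using \<open>S \<subseteq> filter_extension A F S\<close> S(2) by auto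
    show "b \<in> filter_extension A F S"
      if a: "a \<in> filter_extension A F S" and b: "b \<in> acar A" "ale A a b" for a b
    proof -
      obtain x y where xy: "x \<in> F" "y \<in> S" "ale A (ameet A x y) a" "a \<in> acar A"
        using a unfolding filter_extension_def by blast
      have "ameet A x y \<in> acar A" using xy F_carrier S(1) by (intro meet_closed) auto
      then have "ale A (ameet A x y) b" using le_trans xy(3,4) b by blast
      then show ?thesis using xy(1,2) b(1) unfolding filter_extension_def by blast
    qed
    show "ameet A a b \<in> filter_extension A F S"
      if "a \<in> filter_extension A F S" "b \<in> filter_extension A F S" for a b
      using filter_extension_meet[OF F S(1) S_meet that] .
  qed
qed

lemma filter_extension_singleton:
  assumes "is_filter A F" "a \<in> acar A"
  shows "is_filter A (filter_extension A F {a})" "F \<subseteq> filter_extension A F {a}"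
    "a \<in> filter_extension A F {a}"
  using filter_extension[OF assms(1), of "{a}"] assms(2) meet_idem by auto

lemma Union_chain_filter:
  assumes "C \<noteq> {}" "\<And>H. H \<in> C \<Longrightarrow> is_filter A H"
    and chain: "\<And>G H. \<lbrakk>G \<in> C; H \<in> C\<rbrakk> \<Longrightarrow> G \<subseteq> H \<or> H \<subseteq> G"
  shows "is_filter A (\<Union>C)"
  unfolding is_filter_def
proof (intro conjI ballI impI)
  show "\<Union>C \<subseteq> acar A" "\<Union>C \<noteq> {}"
    using assms(1,2) filter_carrier filter_top by blast+
  show "b \<in> \<Union>C" if "a \<in> \<Union>C" "b \<in> acar A" "ale A a b" for a b
    using that assms(2) filter_upward by blast
  show "ameet A a b \<in> \<Union>C" if ab: "a \<in> \<Union>C" "b \<in> \<Union>C" for a b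
  proof -
    obtain G H where "G \<in> C" "H \<in> C" "a \<in> G" "b \<in> H" using ab by blast
    then show ?thesis using chain[of G H] assms(2) filter_meet by blast
  qed
qed

lemma filter_Zorn:
  assumes F: "is_filter A F" "Q F"
    and chain: "\<And>C. \<lbrakk>C \<noteq> {}; \<And>H. H \<in> C \<Longrightarrow> is_filter A H \<and> F \<subseteq> H \<and> Q H\<rbrakk> \<Longrightarrow> Q (\<Union>C)"
  shows "\<exists>M. is_filter A M \<and> F \<subseteq> M \<and> Q M \<and> (\<forall>H. is_filter A H \<and> M \<subseteq> H \<and> Q H \<longrightarrow> H = M)"
proof -
  define S where "S = {H. is_filter A H \<and> F \<subseteq> H \<and> Q H}"
  have "\<exists>M\<in>S. \<forall>H\<in>S. M \<subseteq> H \<longrightarrow> H = M"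
  proof (rule subset_Zorn_nonempty)
    show "S \<noteq> {}" using F unfolding S_def by blast
    fix C assume C: "C \<noteq> {}" "subset.chain S C"
    then have members: "\<And>H. H \<in> C \<Longrightarrow> is_filter A H \<and> F \<subseteq> H \<and> Q H"
      and comparable: "\<And>G H. \<lbrakk>G \<in> C; H \<in> C\<rbrakk> \<Longrightarrow> G \<subseteq> H \<or> H \<subseteq> G"
      unfolding subset_chain_def S_def by auto
    have "is_filter A (\<Union>C)"
      using Union_chain_filter[OF C(1)] members comparable by blast
    moreover have "F \<subseteq> \<Union>C" using C(1) members by blast
    moreover have "Q (\<Union>C)" using chain[OF C(1) members] .
    ultimately show "\<Union>C \<in> S" unfolding S_def by blast
  qed
  then obtain M where "M \<in> S" and max: "\<forall>H\<in>S. M \<subseteq> H \<longrightarrow> H = M" ..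
  then have M: "is_filter A M" "F \<subseteq> M" "Q M" unfolding S_def by simp_all
  have "H = M" if "is_filter A H" "M \<subseteq> H" "Q H" for H
    using max M(2) that unfolding S_def by auto
  then show ?thesis using M by blast
qed

end

section \<open>Homomorphisms and the dual partial map\<close>

locale meet_semilattice_hom =
  A: meet_semilattice_alg A + B: meet_semilattice_alg B
  for A :: "'a alg" and B :: "'b alg" +
  fixes f :: "'a \<Rightarrow> 'b"
  assumes hom_closed: "a \<in> acar A \<Longrightarrow> f a \<in> acar B"
    and hom_top: "f (atop A) = atop B"
    and hom_meet: "\<lbrakk>a \<in> acar A; b \<in> acar A\<rbrakk> \<Longrightarrow> f (ameet A a b) = ameet B (f a) (f b)"
begin

lemma hom_mono: "\<lbrakk>a \<in> acar A; b \<in> acar A; ale A a b\<rbrakk> \<Longrightarrow> ale B (f a) (f b)"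
  unfolding ale_def by (metis hom_meet)

lemma filter_preimg:
  assumes H: "is_filter B H"
  shows "is_filter A (preimg A f H)"
  unfolding is_filter_def
proof (intro conjI ballI impI)
  show "preimg A f H \<subseteq> acar A" unfolding preimg_def by blast
  show "preimg A f H \<noteq> {}"
    using B.filter_top[OF H] A.top_closed hom_top unfolding preimg_def by auto
  show "b \<in> preimg A f H" if "a \<in> preimg A f H" "b \<in> acar A" "ale A a b" for a b
    using that B.filter_upward[OF H] hom_mono hom_closed unfolding preimg_def by auto
  show "ameet A a b \<in> preimg A f H" if "a \<in> preimg A f H" "b \<in> preimg A f H" for a b
    using that B.filter_meet[OF H] hom_meet A.meet_closed unfolding preimg_def by auto
qed

lemma filter_extension_image:
  assumes F: "is_filter B F" and G: "is_filter A G"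
  shows "is_filter B (filter_extension B F (f ` G))" "F \<subseteq> filter_extension B F (f ` G)"
    "f ` G \<subseteq> filter_extension B F (f ` G)"
proof -
  have image: "f ` G \<subseteq> acar B" "f ` G \<noteq> {}"
    using A.filter_carrier[OF G] hom_closed G unfolding is_filter_def by auto
  have image_meet: "ameet B a b \<in> f ` G" if ab: "a \<in> f ` G" "b \<in> f ` G" for a b
  proof -
    obtain g h where gh: "g \<in> G" "h \<in> G" "a = f g" "b = f h" using ab by blast
    then have "ameet B a b = f (ameet A g h)"
      using A.filter_carrier[OF G] hom_meet by (simp add: subset_iff)
    moreover have "ameet A g h \<in> G" using A.filter_meet[OF G gh(1,2)] .
    ultimately show ?thesis by blast
  qed
  show "is_filter B (filter_extension B F (f ` G))" "F \<subseteq> filter_extension B F (f ` G)"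
    "f ` G \<subseteq> filter_extension B F (f ` G)"
    using B.filter_extension[OF F image image_meet] by auto
qed

text \<open>The form of the prime filter theorem needed here.\<close>

lemma mi_filter_extension:
  assumes F: "is_filter B F" "preimg A f F = G" and G: "mi_filter A G"
  obtains M where "mi_filter B M" "F \<subseteq> M" "preimg A f M = G"
proof -
  have Union: "preimg A f (\<Union>C) = G"
    if "C \<noteq> {}" "\<And>H. H \<in> C \<Longrightarrow> is_filter B H \<and> F \<subseteq> H \<and> preimg A f H = G" for C
  proof -
    have "preimg A f (\<Union>C) = (\<Union>H\<in>C. preimg A f H)" unfolding preimg_def by auto
    moreover have "\<And>H. H \<in> C \<Longrightarrow> preimg A f H = G" using that(2) by blast
    ultimately show ?thesis using that(1) by auto
  qed
  obtain M where "is_filter B M \<and> F \<subseteq> M \<and> preimg A f M = G \<and>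
      (\<forall>H. is_filter B H \<and> M \<subseteq> H \<and> preimg A f H = G \<longrightarrow> H = M)"
    using B.filter_Zorn[of F "\<lambda>H. preimg A f H = G", OF F Union] ..
  then have M: "is_filter B M" "F \<subseteq> M" "preimg A f M = G"
    and max: "\<forall>H. is_filter B H \<and> M \<subseteq> H \<and> preimg A f H = G \<longrightarrow> H = M"
    by simp_all
  have "mi_filter B M"
    unfolding mi_filter_def
  proof (intro conjI allI impI)
    show "is_filter B M" by (fact M(1))
    show "M \<noteq> acar B"
      using M(3) G hom_closed unfolding mi_filter_def preimg_def by auto
    fix H1 H2 assume H: "is_filter B H1 \<and> is_filter B H2 \<and> M = H1 \<inter> H2"
    then have "preimg A f H1 \<inter> preimg A f H2 = G" using M(3) unfolding preimg_def by auto
    then have "preimg A f H1 = G \<or> preimg A f H2 = G"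
      using G filter_preimg H unfolding mi_filter_def by blast
    then show "H1 = M \<or> H2 = M" using max H by blast
  qed
  then show ?thesis using that M(2,3) by blast
qed

end

lemma dual_set_filter: "F \<in> dual_set A \<Longrightarrow> is_filter A F \<and> F \<noteq> acar A"
  unfolding dual_set_def mi_filter_def by auto

lemma dom_fstar_iff: "F \<in> dom (fstar A B f) \<longleftrightarrow> F \<in> dual_set B \<and> preimg A f F \<in> dual_set A"
  unfolding fstar_def by (auto split: if_splits)

lemma fstar_apply: "F \<in> dom (fstar A B f) \<Longrightarrow> the (fstar A B f F) = preimg A f F"
  unfolding fstar_def by (auto split: if_splits)

lemma ran_fstar_subset: "ran (fstar A B f) \<subseteq> dual_set A"
  unfolding fstar_def ran_def by (auto split: if_splits)

lemma fstar_order_pres: "order_pres (dual_set B) (\<subseteq>) (dual_set A) (\<subseteq>) (fstar A B f)"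
  unfolding order_pres_def partial_map_def
proof (intro conjI ballI impI)
  show "dom (fstar A B f) \<subseteq> dual_set B" using dom_fstar_iff by blast
  show "ran (fstar A B f) \<subseteq> dual_set A" by (rule ran_fstar_subset)
  show "the (fstar A B f F) \<subseteq> the (fstar A B f F')"
    if "F \<in> dom (fstar A B f)" "F' \<in> dom (fstar A B f)" "F \<subseteq> F'" for F F'
    unfolding fstar_apply[OF that(1)] fstar_apply[OF that(2)] preimg_def using that(3) by blast
qed

context meet_semilattice_hom
begin

text \<open>All back conditions on \<open>f\<^sub>*\<close>, and its surjectivity, reduce to this lemma.\<close>

lemma fstar_reaches:
  assumes F: "is_filter B F" and G: "G \<in> dual_set A"
    and pre: "preimg A f (filter_extension B F (f ` G)) \<subseteq> G"
  obtains M where "M \<in> dom (fstar A B f)" "F \<subseteq> M" "the (fstar A B f M) = G"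
proof -
  have G_filter: "is_filter A G" using dual_set_filter[OF G] by blast
  note ext = filter_extension_image[OF F G_filter]
  have "preimg A f (filter_extension B F (f ` G)) = G"
    using pre ext(3) A.filter_carrier[OF G_filter] unfolding preimg_def by blast
  then obtain M where M: "mi_filter B M" "filter_extension B F (f ` G) \<subseteq> M" "preimg A f M = G"
    using mi_filter_extension[OF ext(1)] G unfolding dual_set_def by blast
  then have "M \<in> dom (fstar A B f)" using G unfolding dom_fstar_iff dual_set_def by simp
  then show ?thesis using that M ext(2) fstar_apply by blast
qed

lemma ran_fstar_eq:
  assumes inj: "inj_on f (acar A)"
  shows "ran (fstar A B f) = dual_set A"
proof
  show "ran (fstar A B f) \<subseteq> dual_set A" by (rule ran_fstar_subset)
  show "dual_set A \<subseteq> ran (fstar A B f)"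
  proof
    fix G assume G: "G \<in> dual_set A"
    have G_filter: "is_filter A G" using dual_set_filter[OF G] by blast
    have "preimg A f (filter_extension B {atop B} (f ` G)) \<subseteq> G"
    proof
      fix a assume "a \<in> preimg A f (filter_extension B {atop B} (f ` G))"
      then obtain g where a: "a \<in> acar A" "g \<in> G" "ale B (ameet B (atop B) (f g)) (f a)"
        unfolding preimg_def filter_extension_def by blast
      have g: "g \<in> acar A" using a(2) A.filter_carrier[OF G_filter] by blast
      have "ameet B (atop B) (f g) = f g"
        using B.le_top[OF hom_closed[OF g]] B.meet_commute[OF hom_closed[OF g] B.top_closed]
        unfolding ale_def by simp
      then have "f (ameet A g a) = f g" using a(3) hom_meet[OF g a(1)] unfolding ale_def by simp
      then have "ale A g a"
        using inj A.meet_closed[OF g a(1)] g unfolding inj_on_def ale_def by blast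
      then show "a \<in> G" using A.filter_upward[OF G_filter a(2,1)] by blast
    qed
    then obtain M where "M \<in> dom (fstar A B f)" "the (fstar A B f M) = G"
      using fstar_reaches[OF B.top_filter G] by blast
    then show "G \<in> ran (fstar A B f)" unfolding ran_def by force
  qed
qed

end

section \<open>Pseudocomplemented algebras\<close>

locale pseudocomplemented_alg = meet_semilattice_alg A for A :: "'a alg" +
  fixes neg :: "'a \<Rightarrow> 'a"
  assumes bot_closed: "abot A \<in> acar A"
    and bot_le: "a \<in> acar A \<Longrightarrow> ale A (abot A) a"
    and neg_closed: "a \<in> acar A \<Longrightarrow> neg a \<in> acar A"
    and meet_eq_bot_iff: "\<lbrakk>a \<in> acar A; c \<in> acar A\<rbrakk> \<Longrightarrow> ameet A c a = abot A \<longleftrightarrow> ale A c (neg a)"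
begin

lemma le_bot_iff: "c \<in> acar A \<Longrightarrow> ale A c (abot A) \<longleftrightarrow> c = abot A"
  using le_antisym[OF _ bot_closed] bot_le le_refl by blast

lemma meet_neg_self: "a \<in> acar A \<Longrightarrow> ameet A (neg a) a = abot A"
  using meet_eq_bot_iff le_refl neg_closed by blast

lemma proper_filter_iff_bot_notin: "is_filter A F \<Longrightarrow> F \<noteq> acar A \<longleftrightarrow> abot A \<notin> F"
  using filter_carrier filter_upward bot_le bot_closed by blast

lemma maximal_filter_extension:
  assumes F: "is_filter A F" "abot A \<notin> F"
  obtains M where "maximal_filter A M" "F \<subseteq> M"
proof -
  have Union: "abot A \<notin> \<Union>C"
    if "\<And>H. H \<in> C \<Longrightarrow> is_filter A H \<and> F \<subseteq> H \<and> abot A \<notin> H" for C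
    using that by blast
  obtain M where "is_filter A M \<and> F \<subseteq> M \<and> abot A \<notin> M \<and>
      (\<forall>H. is_filter A H \<and> M \<subseteq> H \<and> abot A \<notin> H \<longrightarrow> H = M)"
    using filter_Zorn[of F "\<lambda>H. abot A \<notin> H", OF F Union] ..
  then have "maximal_filter A M" "F \<subseteq> M"
    unfolding maximal_filter_def using proper_filter_iff_bot_notin by auto
  then show ?thesis by (rule that)
qed

lemma maximal_filter_iff:
  assumes M: "is_filter A M" "M \<noteq> acar A"
  shows "maximal_filter A M \<longleftrightarrow> (\<forall>a\<in>acar A. a \<notin> M \<longrightarrow> neg a \<in> M)"
proof
  assume max: "maximal_filter A M"
  show "\<forall>a\<in>acar A. a \<notin> M \<longrightarrow> neg a \<in> M"
  proof (intro ballI impI)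
    fix a assume a: "a \<in> acar A" "a \<notin> M"
    note ext = filter_extension_singleton[OF M(1) a(1)]
    have "filter_extension A M {a} = acar A"
      using max ext a(2) unfolding maximal_filter_def by blast
    then obtain x where x: "x \<in> M" "ale A (ameet A x a) (abot A)"
      using bot_closed unfolding filter_extension_def by blast
    have "x \<in> acar A" using x(1) filter_carrier[OF M(1)] by blast
    then have "ale A x (neg a)"
      using x(2) le_bot_iff meet_closed meet_eq_bot_iff a(1) by blast
    then show "neg a \<in> M" using filter_upward[OF M(1) x(1) neg_closed[OF a(1)]] by blast
  qed
next
  assume complemented: "\<forall>a\<in>acar A. a \<notin> M \<longrightarrow> neg a \<in> M"
  have "H = M" if H: "is_filter A H" "M \<subseteq> H" "H \<noteq> acar A" for H
  proof (rule ccontr)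
    assume "H \<noteq> M"
    then obtain a where a: "a \<in> H" "a \<notin> M" using H(2) by blast
    have "a \<in> acar A" using a(1) filter_carrier[OF H(1)] by blast
    then have "abot A \<in> H"
      using filter_meet[OF H(1) _ a(1)] meet_neg_self complemented a(2) H(2) by force
    then show False using proper_filter_iff_bot_notin[OF H(1)] H(3) by blast
  qed
  then show "maximal_filter A M" using M unfolding maximal_filter_def by blast
qed

end

locale pseudocomplemented_hom = meet_semilattice_hom A B f +
  A: pseudocomplemented_alg A negA + B: pseudocomplemented_alg B negB
  for A :: "'a alg" and B :: "'b alg" and f :: "'a \<Rightarrow> 'b" and negA negB +
  assumes hom_bot: "f (abot A) = abot B"
    and hom_neg: "a \<in> acar A \<Longrightarrow> f (negA a) = negB (f a)"
begin

lemma maximal_filter_preimg: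
  assumes M: "maximal_filter B M"
  shows "maximal_filter A (preimg A f M)"
proof -
  have M_filter: "is_filter B M" and "M \<noteq> acar B" using M unfolding maximal_filter_def by auto
  then have "abot B \<notin> M" using B.proper_filter_iff_bot_notin by blast
  then have "abot A \<notin> preimg A f M" using hom_bot unfolding preimg_def by simp
  then have "preimg A f M \<noteq> acar A" using A.bot_closed by blast
  moreover have "negA a \<in> preimg A f M" if "a \<in> acar A" "a \<notin> preimg A f M" for a
    using that M B.maximal_filter_iff[OF M_filter \<open>M \<noteq> acar B\<close>] hom_closed hom_neg A.neg_closed
    unfolding preimg_def by auto
  ultimately show ?thesis
    using A.maximal_filter_iff filter_preimg[OF M_filter] by blast
qed

lemma maximal_filter_in_dom_fstar: "maximal_filter B M \<Longrightarrow> M \<in> dom (fstar A B f)"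
  by (simp add: dom_fstar_iff dual_set_def maximal_filter_mi_filter maximal_filter_preimg)

lemma dual_set_eq_downcl_maximal:
  "dual_set B =
     downcl (dual_set B) (\<subseteq>) {M \<in> dual_set B. upcl (dual_set B) (\<subseteq>) {M} \<subseteq> dom (fstar A B f)}"
proof -
  have "F \<in> downcl (dual_set B) (\<subseteq>) {M \<in> dual_set B. upcl (dual_set B) (\<subseteq>) {M} \<subseteq> dom (fstar A B f)}"
    if F: "F \<in> dual_set B" for F
  proof -
    have "is_filter B F" "abot B \<notin> F"
      using dual_set_filter[OF F] B.proper_filter_iff_bot_notin by auto
    then obtain M where M: "maximal_filter B M" "F \<subseteq> M" by (rule B.maximal_filter_extension)
    have "N = M" if "N \<in> dual_set B" "M \<subseteq> N" for N
      using M(1) dual_set_filter[OF that(1)] that(2) unfolding maximal_filter_def by blast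
    then have "upcl (dual_set B) (\<subseteq>) {M} \<subseteq> dom (fstar A B f)"
      using maximal_filter_in_dom_fstar[OF M(1)] unfolding upcl_def by auto
    moreover have "M \<in> dual_set B" using maximal_filter_mi_filter[OF M(1)] unfolding dual_set_def ..
    ultimately show ?thesis using F M(2) unfolding downcl_def by blast
  qed
  then show ?thesis unfolding downcl_def by blast
qed

lemma bot_notin_filter_extension:
  assumes F: "F \<in> dom (fstar A B f)" and G: "G \<in> dual_set A"
    and sub: "the (fstar A B f F) \<subseteq> G"
  shows "abot B \<notin> filter_extension B F (f ` G)"
proof
  have F_filter: "is_filter B F" using F dom_fstar_iff dual_set_filter by blast
  have G_filter: "is_filter A G" and "G \<noteq> acar A" using dual_set_filter[OF G] by auto
  assume "abot B \<in> filter_extension B F (f ` G)"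
  then obtain x g where x: "x \<in> F" "g \<in> G" "ale B (ameet B x (f g)) (abot B)"
    unfolding filter_extension_def by blast
  have g: "g \<in> acar A" using x(2) A.filter_carrier[OF G_filter] by blast
  have "x \<in> acar B" using x(1) B.filter_carrier[OF F_filter] by blast
  then have "ale B x (f (negA g))"
    using x(3) B.le_bot_iff B.meet_closed B.meet_eq_bot_iff hom_closed[OF g] hom_neg[OF g]
    by auto
  then have "f (negA g) \<in> F"
    using B.filter_upward[OF F_filter x(1)] hom_closed A.neg_closed g by blast
  then have "negA g \<in> G"
    using sub A.neg_closed[OF g] unfolding fstar_apply[OF F] preimg_def by blast
  from A.filter_meet[OF G_filter this x(2)] have "abot A \<in> G" using A.meet_neg_self[OF g] by simp
  then show False using A.proper_filter_iff_bot_notin[OF G_filter] \<open>G \<noteq> acar A\<close> by blast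
qed

lemma fstar_neg_pmor: "neg_pmor (dual_set B) (\<subseteq>) (dual_set A) (\<subseteq>) (fstar A B f)"
  unfolding neg_pmor_def
proof (intro conjI ballI impI)
  show "order_pres (dual_set B) (\<subseteq>) (dual_set A) (\<subseteq>) (fstar A B f)" by (rule fstar_order_pres)
  show "dual_set B =
      downcl (dual_set B) (\<subseteq>) {M \<in> dual_set B. upcl (dual_set B) (\<subseteq>) {M} \<subseteq> dom (fstar A B f)}"
    by (rule dual_set_eq_downcl_maximal)
  fix F G assume F: "F \<in> dom (fstar A B f)" and G: "G \<in> dual_set A"
    and sub: "the (fstar A B f F) \<subseteq> G"
  have F_filter: "is_filter B F" using F dom_fstar_iff dual_set_filter by blast
  have G_filter: "is_filter A G" using dual_set_filter[OF G] by blast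
  note ext = filter_extension_image[OF F_filter G_filter]
  obtain M where M: "maximal_filter B M" "filter_extension B F (f ` G) \<subseteq> M"
    using B.maximal_filter_extension[OF ext(1) bot_notin_filter_extension[OF F G sub]] by blast
  have "M \<in> dom (fstar A B f)" using maximal_filter_in_dom_fstar[OF M(1)] .
  moreover have "G \<subseteq> the (fstar A B f M)"
    unfolding fstar_apply[OF calculation] preimg_def
    using M(2) ext(3) A.filter_carrier[OF G_filter] by blast
  ultimately show "\<exists>M\<in>dom (fstar A B f). F \<subseteq> M \<and> G \<subseteq> the (fstar A B f M)"
    using M(2) ext(2) by blast
qed

end

section \<open>Implicative algebras\<close>

locale implicative_alg = meet_semilattice_alg A for A :: "'a alg" +
  assumes imp_closed: "\<lbrakk>a \<in> acar A; b \<in> acar A\<rbrakk> \<Longrightarrow> aimp A a b \<in> acar A"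
    and residuation: "\<lbrakk>a \<in> acar A; b \<in> acar A; c \<in> acar A\<rbrakk> \<Longrightarrow>
      ale A (ameet A c a) b \<longleftrightarrow> ale A c (aimp A a b)"
begin

lemma meet_imp_le: "\<lbrakk>a \<in> acar A; b \<in> acar A\<rbrakk> \<Longrightarrow> ale A (ameet A (aimp A a b) a) b"
  using residuation le_refl imp_closed by blast

end

locale implicative_hom = meet_semilattice_hom A B f +
  A: implicative_alg A + B: implicative_alg B
  for A :: "'a alg" and B :: "'b alg" and f :: "'a \<Rightarrow> 'b" +
  assumes hom_imp: "\<lbrakk>a \<in> acar A; b \<in> acar A\<rbrakk> \<Longrightarrow> f (aimp A a b) = aimp B (f a) (f b)"
begin

lemma fstar_pos_pmor: "pos_pmor (dual_set B) (\<subseteq>) (dual_set A) (\<subseteq>) (fstar A B f)"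
  unfolding pos_pmor_def
proof (intro conjI ballI impI)
  show "order_pres (dual_set B) (\<subseteq>) (dual_set A) (\<subseteq>) (fstar A B f)" by (rule fstar_order_pres)
  fix F G assume F: "F \<in> dom (fstar A B f)" and G: "G \<in> dual_set A"
    and sub: "the (fstar A B f F) \<subseteq> G"
  have F_filter: "is_filter B F" using F dom_fstar_iff dual_set_filter by blast
  have G_filter: "is_filter A G" using dual_set_filter[OF G] by blast
  have "preimg A f (filter_extension B F (f ` G)) \<subseteq> G"
  proof
    fix a assume "a \<in> preimg A f (filter_extension B F (f ` G))"
    then obtain x g where a: "a \<in> acar A" "x \<in> F" "g \<in> G" "ale B (ameet B x (f g)) (f a)"
      unfolding preimg_def filter_extension_def by blast
    have g: "g \<in> acar A" using a(3) A.filter_carrier[OF G_filter] by blast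
    have "x \<in> acar B" using a(2) B.filter_carrier[OF F_filter] by blast
    then have "ale B x (f (aimp A g a))"
      using a(4) B.residuation hom_closed hom_imp a(1) g by simp
    then have "f (aimp A g a) \<in> F"
      using B.filter_upward[OF F_filter a(2)] hom_closed A.imp_closed g a(1) by blast
    then have "aimp A g a \<in> G"
      using sub A.imp_closed[OF g a(1)] unfolding fstar_apply[OF F] preimg_def by blast
    from A.filter_meet[OF G_filter this a(3)] show "a \<in> G"
      using A.filter_upward[OF G_filter] A.meet_imp_le[OF g a(1)] A.meet_closed A.imp_closed g a(1)
      by blast
  qed
  then obtain M where "M \<in> dom (fstar A B f)" "F \<subseteq> M" "the (fstar A B f M) = G"
    using fstar_reaches[OF F_filter G] by blast
  then show "\<exists>M\<in>dom (fstar A B f). F \<subseteq> M \<and> G = the (fstar A B f M)" by metis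
qed

end

section \<open>Distributive lattices\<close>

locale lattice_top_alg = meet_semilattice_alg A for A :: "'a alg" +
  assumes lattice: "lattice_alg A"
    and join_closed: "\<lbrakk>a \<in> acar A; b \<in> acar A\<rbrakk> \<Longrightarrow> ajoin A a b \<in> acar A"
begin

lemma join_commute: "\<lbrakk>a \<in> acar A; b \<in> acar A\<rbrakk> \<Longrightarrow> ajoin A a b = ajoin A b a"
  using lattice by (simp add: lattice_alg_def)

lemma join_assoc:
  "\<lbrakk>a \<in> acar A; b \<in> acar A; c \<in> acar A\<rbrakk> \<Longrightarrow> ajoin A (ajoin A a b) c = ajoin A a (ajoin A b c)"
  using lattice by (simp add: lattice_alg_def)

lemma meet_join_absorb: "\<lbrakk>a \<in> acar A; b \<in> acar A\<rbrakk> \<Longrightarrow> ameet A a (ajoin A a b) = a"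
  using lattice by (simp add: lattice_alg_def)

lemma join_meet_absorb: "\<lbrakk>a \<in> acar A; b \<in> acar A\<rbrakk> \<Longrightarrow> ajoin A a (ameet A a b) = a"
  using lattice by (simp add: lattice_alg_def)

lemma join_upper1: "\<lbrakk>a \<in> acar A; b \<in> acar A\<rbrakk> \<Longrightarrow> ale A a (ajoin A a b)"
  by (simp add: ale_def meet_join_absorb)

lemma join_upper2: "\<lbrakk>a \<in> acar A; b \<in> acar A\<rbrakk> \<Longrightarrow> ale A b (ajoin A a b)"
  using join_upper1[of b a] join_commute[of a b] by simp

lemma join_eq_left: "\<lbrakk>a \<in> acar A; c \<in> acar A; ale A a c\<rbrakk> \<Longrightarrow> ajoin A c a = c"
  using join_meet_absorb[of c a] meet_commute[of a c] by (simp add: ale_def)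

lemma join_least:
  assumes "a \<in> acar A" "b \<in> acar A" "c \<in> acar A" "ale A a c" "ale A b c"
  shows "ale A (ajoin A a b) c"
proof -
  have "ajoin A (ajoin A a b) c = ajoin A a (ajoin A c b)"
    using assms(1-3) by (simp add: join_assoc join_commute)
  also have "\<dots> = c"
    using assms join_eq_left join_commute by simp
  finally have "ajoin A (ajoin A a b) c = c" .
  then have "ameet A (ajoin A a b) c = ameet A (ajoin A a b) (ajoin A (ajoin A a b) c)" by simp
  also have "\<dots> = ajoin A a b" using assms(1-3) by (simp add: meet_join_absorb join_closed)
  finally show ?thesis by (simp add: ale_def)
qed

end

definition prime_filter :: "'a alg \<Rightarrow> 'a set \<Rightarrow> bool" where
  "prime_filter A F \<longleftrightarrow> is_filter A F \<and> F \<noteq> acar A \<and>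
     (\<forall>a\<in>acar A. \<forall>b\<in>acar A. ajoin A a b \<in> F \<longrightarrow> a \<in> F \<or> b \<in> F)"

locale distrib_lattice_alg = lattice_top_alg A for A :: "'a alg" +
  assumes meet_join_le: "\<lbrakk>a \<in> acar A; b \<in> acar A; c \<in> acar A\<rbrakk> \<Longrightarrow>
    ale A (ameet A a (ajoin A b c)) (ajoin A (ameet A a b) (ameet A a c))"
begin

lemma prime_filter_mi_filter: "prime_filter A F \<Longrightarrow> mi_filter A F"
  unfolding mi_filter_def
proof (intro conjI allI impI)
  assume prime: "prime_filter A F"
  then show "is_filter A F" "F \<noteq> acar A" unfolding prime_filter_def by auto
  fix G H assume GH: "is_filter A G \<and> is_filter A H \<and> F = G \<inter> H"
  show "G = F \<or> H = F"
  proof (rule ccontr)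
    assume "\<not> (G = F \<or> H = F)"
    then obtain a b where ab: "a \<in> G" "a \<notin> F" "b \<in> H" "b \<notin> F" using GH by blast
    have carrier: "a \<in> acar A" "b \<in> acar A" using ab GH filter_carrier by blast+
    have "ajoin A a b \<in> G" "ajoin A a b \<in> H"
      using filter_upward[OF _ _ join_closed[OF carrier]] join_upper1[OF carrier]
        join_upper2[OF carrier] ab GH by blast+
    then show False using prime carrier ab GH unfolding prime_filter_def by blast
  qed
qed

lemma filter_extension_Int_subset:
  assumes F: "is_filter A F" and ab: "a \<in> acar A" "b \<in> acar A" "ajoin A a b \<in> F"
  shows "filter_extension A F {a} \<inter> filter_extension A F {b} \<subseteq> F"
proof
  have F_carrier: "F \<subseteq> acar A" using F by (rule filter_carrier)
  fix x assume "x \<in> filter_extension A F {a} \<inter> filter_extension A F {b}"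
  then obtain m1 m2 where m: "m1 \<in> F" "m2 \<in> F" "x \<in> acar A"
    "ale A (ameet A m1 a) x" "ale A (ameet A m2 b) x"
    unfolding filter_extension_def by blast
  define m where "m = ameet A m1 m2"
  have m1m2: "m1 \<in> acar A" "m2 \<in> acar A" using m(1,2) F_carrier by auto
  have "m \<in> F" unfolding m_def using filter_meet[OF F m(1,2)] .
  then have m_carrier: "m \<in> acar A" using F_carrier by blast
  have "ale A (ameet A m a) (ameet A m1 a)" "ale A (ameet A m b) (ameet A m2 b)"
    unfolding m_def using m1m2 ab(1,2)
    by (auto intro: meet_mono meet_le1 meet_le2 le_refl meet_closed)
  then have "ale A (ameet A m a) x" "ale A (ameet A m b) x"
    using le_trans[OF _ _ m(3)] m(4,5) m_carrier m1m2 ab(1,2) meet_closed by blast+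
  then have "ale A (ajoin A (ameet A m a) (ameet A m b)) x"
    using join_least m_carrier ab(1,2) m(3) meet_closed by blast
  then have "ale A (ameet A m (ajoin A a b)) x"
    using le_trans[OF _ _ m(3) meet_join_le[OF m_carrier ab(1,2)]] m_carrier ab(1,2)
      meet_closed join_closed by blast
  moreover have "ameet A m (ajoin A a b) \<in> F" using filter_meet[OF F \<open>m \<in> F\<close> ab(3)] .
  ultimately show "x \<in> F" using filter_upward[OF F _ m(3)] by blast
qed

lemma mi_filter_prime_filter:
  assumes mi: "mi_filter A F"
  shows "prime_filter A F"
proof -
  have F: "is_filter A F" and "F \<noteq> acar A" using mi unfolding mi_filter_def by auto
  have "a \<in> F \<or> b \<in> F" if ab: "a \<in> acar A" "b \<in> acar A" "ajoin A a b \<in> F" for a b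
  proof (rule ccontr)
    assume neither: "\<not> (a \<in> F \<or> b \<in> F)"
    note ext_a = filter_extension_singleton[OF F ab(1)]
      and ext_b = filter_extension_singleton[OF F ab(2)]
    have "F = filter_extension A F {a} \<inter> filter_extension A F {b}"
      using filter_extension_Int_subset[OF F ab] ext_a(2) ext_b(2) by blast
    then have "filter_extension A F {a} = F \<or> filter_extension A F {b} = F"
      using mi ext_a(1) ext_b(1) unfolding mi_filter_def by blast
    then show False using ext_a(3) ext_b(3) neither by blast
  qed
  then show ?thesis unfolding prime_filter_def using F \<open>F \<noteq> acar A\<close> by blast
qed

end

locale distrib_lattice_hom = meet_semilattice_hom A B f +
  A: distrib_lattice_alg A + B: distrib_lattice_alg B
  for A :: "'a alg" and B :: "'b alg" and f :: "'a \<Rightarrow> 'b" +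
  assumes hom_join: "\<lbrakk>a \<in> acar A; b \<in> acar A\<rbrakk> \<Longrightarrow> f (ajoin A a b) = ajoin B (f a) (f b)"
begin

lemma preimg_in_dual_set:
  assumes F: "F \<in> dual_set B" and proper: "preimg A f F \<noteq> acar A"
  shows "preimg A f F \<in> dual_set A"
proof -
  have "prime_filter B F" using B.mi_filter_prime_filter F unfolding dual_set_def by blast
  then have "prime_filter A (preimg A f F)"
    using filter_preimg dual_set_filter[OF F] proper hom_join hom_closed
    unfolding prime_filter_def preimg_def by auto
  then show ?thesis using A.prime_filter_mi_filter unfolding dual_set_def by blast
qed

lemma fstar_almost_total: "almost_total (dual_set B) (\<subseteq>) (fstar A B f)"
  unfolding almost_total_def
proof
  fix F assume "F \<in> downcl (dual_set B) (\<subseteq>) (dom (fstar A B f))"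
  then obtain F' where F: "F \<in> dual_set B" "F' \<in> dom (fstar A B f)" "F \<subseteq> F'"
    unfolding downcl_def by blast
  have "preimg A f F' \<noteq> acar A" using F(2) dom_fstar_iff dual_set_filter by blast
  moreover have "preimg A f F \<subseteq> preimg A f F'" "preimg A f F' \<subseteq> acar A"
    using F(3) unfolding preimg_def by auto
  ultimately have "preimg A f F \<noteq> acar A" by blast
  then show "F \<in> dom (fstar A B f)" using preimg_in_dual_set F(1) dom_fstar_iff by blast
qed

end

lemma in_K_meet_semilattice_alg: "in_K K A \<Longrightarrow> meet_semilattice_alg A"
  unfolding in_K_def closed_K_def meet_semilattice_alg_def by auto

lemma hom_K_meet_semilattice_hom:
  assumes "in_K K A" "in_K K B" "hom_K K A B f"
  shows "meet_semilattice_hom A B f"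
proof -
  interpret A: meet_semilattice_alg A using assms(1) by (rule in_K_meet_semilattice_alg)
  interpret B: meet_semilattice_alg B using assms(2) by (rule in_K_meet_semilattice_alg)
  show ?thesis by unfold_locales (use assms(3) in \<open>auto simp: hom_K_def\<close>)
qed

lemma in_K_implicative_alg:
  assumes "in_K K A" "has_imp K"
  shows "implicative_alg A"
proof -
  interpret meet_semilattice_alg A using assms(1) by (rule in_K_meet_semilattice_alg)
  show ?thesis by unfold_locales (use assms in \<open>auto simp: in_K_def closed_K_def\<close>)
qed

lemma hom_K_implicative_hom:
  assumes "in_K K A" "in_K K B" "hom_K K A B f" "has_imp K"
  shows "implicative_hom A B f"
proof -
  interpret meet_semilattice_hom A B f using assms(1-3) by (rule hom_K_meet_semilattice_hom)
  interpret A: implicative_alg A using assms(1,4) by (rule in_K_implicative_alg)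
  interpret B: implicative_alg B using assms(2,4) by (rule in_K_implicative_alg)
  show ?thesis by unfold_locales (use assms(3,4) in \<open>auto simp: hom_K_def\<close>)
qed

text \<open>The pseudocomplement is \<open>\<not>\<close> in \<open>PSL\<close> and \<open>PDL\<close>, and \<open>a \<rightarrow> 0\<close> in \<open>bISL\<close> and \<open>HA\<close>.\<close>

definition pcompl :: "variety \<Rightarrow> 'a alg \<Rightarrow> 'a \<Rightarrow> 'a" where
  "pcompl K A a = (if has_neg K then aneg A a else aimp A a (abot A))"

lemma has_bot_without_neg: "\<lbrakk>has_bot K; \<not> has_neg K\<rbrakk> \<Longrightarrow> has_imp K"
  unfolding has_bot_def has_neg_def has_imp_def by (cases K) auto

lemma in_K_pseudocomplemented_alg:
  assumes A: "in_K K A" and bot: "has_bot K"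
  shows "pseudocomplemented_alg A (pcompl K A)"
proof -
  interpret meet_semilattice_alg A using A by (rule in_K_meet_semilattice_alg)
  have bot_closed: "abot A \<in> acar A" and bot_le: "\<And>a. a \<in> acar A \<Longrightarrow> ale A (abot A) a"
    using A bot unfolding in_K_def closed_K_def by auto
  show ?thesis
  proof (cases "has_neg K")
    case True
    then show ?thesis
      by unfold_locales (use A bot_closed bot_le in \<open>auto simp: in_K_def closed_K_def pcompl_def\<close>)
  next
    case False
    then interpret implicative_alg A using A bot has_bot_without_neg in_K_implicative_alg by blast
    have "ameet A c a = abot A \<longleftrightarrow> ale A c (aimp A a (abot A))"
      if "a \<in> acar A" "c \<in> acar A" for a c
      using that residuation[OF _ bot_closed] le_antisym[OF _ bot_closed] bot_le meet_closed le_refl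
      by metis
    then show ?thesis
      by unfold_locales (use False bot_closed bot_le imp_closed in \<open>auto simp: pcompl_def\<close>)
  qed
qed

lemma hom_K_pseudocomplemented_hom:
  assumes A: "in_K K A" and B: "in_K K B" and f: "hom_K K A B f" and bot: "has_bot K"
  shows "pseudocomplemented_hom A B f (pcompl K A) (pcompl K B)"
proof -
  interpret meet_semilattice_hom A B f using A B f by (rule hom_K_meet_semilattice_hom)
  interpret A: pseudocomplemented_alg A "pcompl K A" using A bot by (rule in_K_pseudocomplemented_alg)
  interpret B: pseudocomplemented_alg B "pcompl K B" using B bot by (rule in_K_pseudocomplemented_alg)
  show ?thesis
    by unfold_locales
      (use f bot A.bot_closed has_bot_without_neg[OF bot] in \<open>auto simp: hom_K_def pcompl_def\<close>)
qed

lemma has_join_not_PDL: "\<lbrakk>has_join K; K \<noteq> PDL\<rbrakk> \<Longrightarrow> has_imp K"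
  unfolding has_join_def has_imp_def by (cases K) auto

lemma in_K_distrib_lattice_alg:
  assumes A: "in_K K A" and join: "has_join K"
  shows "distrib_lattice_alg A"
proof -
  interpret meet_semilattice_alg A using A by (rule in_K_meet_semilattice_alg)
  interpret lattice_top_alg A
    by unfold_locales (use A join in \<open>auto simp: in_K_def closed_K_def\<close>)
  show ?thesis
  proof unfold_locales
    fix a b c assume abc: "a \<in> acar A" "b \<in> acar A" "c \<in> acar A"
    show "ale A (ameet A a (ajoin A b c)) (ajoin A (ameet A a b) (ameet A a c))"
    proof (cases "K = PDL")
      case True
      then have "distributive_alg A" using A unfolding in_K_def by blast
      then show ?thesis
        using abc le_refl meet_closed join_closed unfolding distributive_alg_def by auto
    next
      case False
      then interpret implicative_alg A using A join has_join_not_PDL in_K_implicative_alg by blast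
      txt \<open>Residuated lattices are distributive: \<open>b\<close> and \<open>c\<close> both lie below \<open>a \<rightarrow> d\<close>.\<close>
      define d where "d = ajoin A (ameet A a b) (ameet A a c)"
      have d: "d \<in> acar A" unfolding d_def using abc by (intro join_closed meet_closed)
      have "ale A (ameet A b a) d" "ale A (ameet A c a) d"
        unfolding d_def using abc meet_commute join_upper1 join_upper2 meet_closed by metis+
      then have "ale A b (aimp A a d)" "ale A c (aimp A a d)"
        using residuation[OF abc(1) d] abc by blast+
      then have "ale A (ajoin A b c) (aimp A a d)"
        using join_least abc imp_closed[OF abc(1) d] by blast
      then have "ale A (ameet A (ajoin A b c) a) d"
        using residuation[OF abc(1) d join_closed[OF abc(2,3)]] by blast
      then show ?thesis
        unfolding d_def[symmetric] using meet_commute abc join_closed by metis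
    qed
  qed
qed

lemma hom_K_distrib_lattice_hom:
  assumes "in_K K A" "in_K K B" "hom_K K A B f" "has_join K"
  shows "distrib_lattice_hom A B f"
proof -
  interpret meet_semilattice_hom A B f using assms(1-3) by (rule hom_K_meet_semilattice_hom)
  interpret A: distrib_lattice_alg A using assms(1,4) by (rule in_K_distrib_lattice_alg)
  interpret B: distrib_lattice_alg B using assms(2,4) by (rule in_K_distrib_lattice_alg)
  show ?thesis by unfold_locales (use assms(3,4) in \<open>auto simp: hom_K_def\<close>)
qed

lemma fstar_total:
  assumes "distrib_lattice_hom A B f" and "pseudocomplemented_hom A B f negA negB"
  shows "total_map (dual_set B) (fstar A B f)"
proof -
  interpret distrib_lattice_hom A B f by fact
  interpret pseudocomplemented_hom A B f negA negB by fact
  have "F \<in> dom (fstar A B f)" if F: "F \<in> dual_set B" for F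
  proof -
    have "abot B \<notin> F" using dual_set_filter[OF F] B.proper_filter_iff_bot_notin by blast
    then have "abot A \<notin> preimg A f F" using hom_bot unfolding preimg_def by simp
    then have "preimg A f F \<noteq> acar A" using A.bot_closed by blast
    then show ?thesis using preimg_in_dual_set F dom_fstar_iff by blast
  qed
  then show ?thesis unfolding total_map_def using dom_fstar_iff by blast
qed

lemma in_Kdual_iff:
  "in_Kdual K X leX Y leY p \<longleftrightarrow>
     (has_bot K \<longrightarrow> neg_pmor X leX Y leY p) \<and> (has_imp K \<longrightarrow> pos_pmor X leX Y leY p) \<and>
     (has_join K \<longrightarrow> almost_total X leX p) \<and> (has_join K \<and> has_bot K \<longrightarrow> total_map X p)"
proof -
  have "total_map X p \<Longrightarrow> almost_total X leX p"
    unfolding total_map_def almost_total_def downcl_def by blast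
  then show ?thesis
    unfolding in_Kdual_def has_bot_def has_imp_def has_join_def by (cases K) auto
qed

lemma fstar_in_Kdual:
  assumes A: "in_K K A" and B: "in_K K B" and f: "hom_K K A B f"
  shows "in_Kdual K (dual_set B) (\<subseteq>) (dual_set A) (\<subseteq>) (fstar A B f)"
  unfolding in_Kdual_iff
  using pseudocomplemented_hom.fstar_neg_pmor[OF hom_K_pseudocomplemented_hom[OF A B f]]
    implicative_hom.fstar_pos_pmor[OF hom_K_implicative_hom[OF A B f]]
    distrib_lattice_hom.fstar_almost_total[OF hom_K_distrib_lattice_hom[OF A B f]]
    fstar_total[OF hom_K_distrib_lattice_hom[OF A B f] hom_K_pseudocomplemented_hom[OF A B f]]
  by blast

section \<open>Algebras of upsets\<close>

lemma mem_upsets_iff: "U \<in> upsets Y le \<longleftrightarrow> U \<subseteq> Y \<and> (\<forall>u\<in>U. \<forall>y\<in>Y. le u y \<longrightarrow> y \<in> U)"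
  unfolding upsets_def upcl_def by auto

lemma mem_up_imp_iff: "x \<in> up_imp X le U V \<longleftrightarrow> x \<in> X \<and> \<not> (\<exists>u. le x u \<and> u \<in> U \<and> u \<notin> V)"
  unfolding up_imp_def downcl_def by auto

lemma mem_Up_map_iff:
  assumes "partial_map X Y p"
  shows "x \<in> Up_map X le Y p U \<longleftrightarrow> x \<in> X \<and> (\<forall>w y. le x w \<longrightarrow> p w = Some y \<longrightarrow> y \<in> U)"
  using assms unfolding Up_map_def downcl_def pmap_preimg_def partial_map_def dom_def ran_def
  by blast

locale monotone_partial_map =
  fixes X :: "'x set" and leX :: "'x \<Rightarrow> 'x \<Rightarrow> bool"
    and Y :: "'y set" and leY :: "'y \<Rightarrow> 'y \<Rightarrow> bool" and p :: "'x \<rightharpoonup> 'y"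
  assumes poset_X: "poset X leX" and poset_Y: "poset Y leY"
    and order_pres: "order_pres X leX Y leY p"
begin

abbreviation Up_p :: "'y set \<Rightarrow> 'x set" where
  "Up_p \<equiv> Up_map X leX Y p"

lemma partial_map_p: "partial_map X Y p"
  using order_pres unfolding order_pres_def by blast

lemma p_SomeD: "p w = Some y \<Longrightarrow> w \<in> X \<and> y \<in> Y"
  using partial_map_p unfolding partial_map_def dom_def ran_def by blast

lemma p_mono: "\<lbrakk>p w = Some y; p w' = Some y'; leX w w'\<rbrakk> \<Longrightarrow> leY y y'"
  using order_pres unfolding order_pres_def by force

lemma leX_refl: "x \<in> X \<Longrightarrow> leX x x"
  using poset_X unfolding poset_def by blast

lemma leX_trans: "\<lbrakk>x \<in> X; y \<in> X; z \<in> X; leX x y; leX y z\<rbrakk> \<Longrightarrow> leX x z"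
  using poset_X unfolding poset_def by blast

lemma leY_refl: "y \<in> Y \<Longrightarrow> leY y y"
  using poset_Y unfolding poset_def by blast

lemmas mem_Up_p_iff = mem_Up_map_iff[OF partial_map_p]

lemma Up_p_upset: "Up_p U \<in> upsets X leX"
  unfolding mem_upsets_iff
proof (intro conjI ballI impI)
  show "Up_p U \<subseteq> X" unfolding subset_iff mem_Up_p_iff by blast
  fix u x assume u: "u \<in> Up_p U" and x: "x \<in> X" "leX u x"
  show "x \<in> Up_p U" unfolding mem_Up_p_iff
    using u x leX_trans p_SomeD unfolding mem_Up_p_iff by blast
qed

lemma Up_p_top: "Up_p Y = X"
  unfolding set_eq_iff mem_Up_p_iff using p_SomeD by blast

lemma Up_p_Int: "Up_p (U \<inter> V) = Up_p U \<inter> Up_p V"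
  unfolding set_eq_iff Int_iff mem_Up_p_iff by blast

lemma Up_p_memI:
  assumes U: "U \<in> upsets Y leY" and z: "p z = Some u" "u \<in> U"
  shows "z \<in> Up_p U"
  unfolding mem_Up_p_iff
  using U z p_SomeD p_mono unfolding mem_upsets_iff by blast

lemma Up_p_Un:
  assumes "almost_total X leX p" and U: "U \<in> upsets Y leY" and V: "V \<in> upsets Y leY"
  shows "Up_p (U \<union> V) = Up_p U \<union> Up_p V"
proof
  show "Up_p U \<union> Up_p V \<subseteq> Up_p (U \<union> V)" unfolding subset_iff Un_iff mem_Up_p_iff by blast
  show "Up_p (U \<union> V) \<subseteq> Up_p U \<union> Up_p V"
  proof
    fix x assume x: "x \<in> Up_p (U \<union> V)"
    show "x \<in> Up_p U \<union> Up_p V"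
    proof (rule ccontr)
      assume "x \<notin> Up_p U \<union> Up_p V"
      then obtain w1 y1 w2 y2 where w: "leX x w1" "p w1 = Some y1" "y1 \<notin> U"
        "leX x w2" "p w2 = Some y2" "y2 \<notin> V"
        using x unfolding Un_iff mem_Up_p_iff by blast
      txt \<open>Almost totality makes \<open>x\<close> itself defined, and its value lies below \<open>y\<^sub>1\<close> and \<open>y\<^sub>2\<close>.\<close>
      have "x \<in> X" using x unfolding mem_Up_p_iff by blast
      then have "x \<in> dom p"
        using assms(1) w(1,2) unfolding almost_total_def downcl_def by blast
      then obtain y where y: "p x = Some y" by blast
      then have "y \<in> U \<union> V" using x leX_refl[OF \<open>x \<in> X\<close>] unfolding mem_Up_p_iff by blast
      moreover have "leY y y1" "leY y y2" using p_mono y w by blast+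
      ultimately show False
        using U V w p_SomeD unfolding mem_upsets_iff by blast
    qed
  qed
qed

lemma Up_p_empty:
  assumes "X = downcl X leX {x \<in> X. upcl X leX {x} \<subseteq> dom p}"
  shows "Up_p {} = {}"
proof -
  have "x \<notin> Up_p {}" for x
  proof
    assume x: "x \<in> Up_p {}"
    then obtain z where z: "z \<in> X" "leX x z" "upcl X leX {z} \<subseteq> dom p"
      using assms unfolding mem_Up_p_iff downcl_def by blast
    then have "z \<in> dom p" using leX_refl unfolding upcl_def by blast
    then show False using x z unfolding mem_Up_p_iff by blast
  qed
  then show ?thesis by blast
qed

lemma Up_p_up_imp_subset: "Up_p (up_imp Y leY U V) \<subseteq> up_imp X leX (Up_p U) (Up_p V)"
proof
  fix x assume x: "x \<in> Up_p (up_imp Y leY U V)"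
  have "False" if z: "leX x z" "z \<in> Up_p U" "z \<notin> Up_p V" for z
  proof -
    obtain w y where w: "leX z w" "p w = Some y" "y \<notin> V"
      using z(2,3) unfolding mem_Up_p_iff by blast
    have "y \<in> U" using z(2) w unfolding mem_Up_p_iff by blast
    moreover have "leX x w" using leX_trans z w p_SomeD x unfolding mem_Up_p_iff by blast
    ultimately have "y \<in> up_imp Y leY U V" "leY y y"
      using x w(2) leY_refl p_SomeD unfolding mem_Up_p_iff by blast+
    then show False using \<open>y \<in> U\<close> w(3) unfolding mem_up_imp_iff by blast
  qed
  then show "x \<in> up_imp X leX (Up_p U) (Up_p V)"
    using x unfolding mem_up_imp_iff mem_Up_p_iff by blast
qed

text \<open>The reverse inclusion needs exactly the back condition of (positive or negative)
  p-morphisms, restricted to the pair \<open>U, V\<close>.\<close>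

lemma up_imp_Up_p_subset:
  assumes U: "U \<in> upsets Y leY"
    and lift: "\<And>w u. \<lbrakk>w \<in> dom p; u \<in> U; u \<notin> V; leY (the (p w)) u\<rbrakk> \<Longrightarrow>
      \<exists>z\<in>dom p. leX w z \<and> the (p z) \<in> U \<and> the (p z) \<notin> V"
  shows "up_imp X leX (Up_p U) (Up_p V) \<subseteq> Up_p (up_imp Y leY U V)"
proof
  fix x assume x: "x \<in> up_imp X leX (Up_p U) (Up_p V)"
  then have x_X: "x \<in> X" and x_max: "\<And>z. \<lbrakk>leX x z; z \<in> Up_p U\<rbrakk> \<Longrightarrow> z \<in> Up_p V"
    unfolding mem_up_imp_iff by blast+
  have "y \<in> up_imp Y leY U V" if w: "leX x w" "p w = Some y" for w y
  proof -
    have "False" if u: "leY y u" "u \<in> U" "u \<notin> V" for u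
    proof -
      obtain z where z: "z \<in> dom p" "leX w z" "the (p z) \<in> U" "the (p z) \<notin> V"
        using lift[of w u] w(2) u by auto
      then obtain v where v: "p z = Some v" by blast
      have "z \<in> Up_p U" using Up_p_memI[OF U v] z(3) v by simp
      moreover have "leX x z" using leX_trans x_X w z(2) v p_SomeD by blast
      ultimately have "z \<in> Up_p V" by (rule x_max[rotated])
      then show False using v z(4) leX_refl p_SomeD unfolding mem_Up_p_iff by force
    qed
    then show ?thesis using p_SomeD[OF w(2)] unfolding mem_up_imp_iff by blast
  qed
  then show "x \<in> Up_p (up_imp Y leY U V)" using x_X unfolding mem_Up_p_iff by blast
qed

lemma Up_p_up_imp:
  assumes "pos_pmor X leX Y leY p" "U \<in> upsets Y leY"
  shows "Up_p (up_imp Y leY U V) = up_imp X leX (Up_p U) (Up_p V)"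
proof (rule antisym[OF Up_p_up_imp_subset up_imp_Up_p_subset[OF assms(2)]])
  fix w u assume w: "w \<in> dom p" "u \<in> U" "u \<notin> V" "leY (the (p w)) u"
  have "u \<in> Y" using assms(2) w(2) unfolding mem_upsets_iff by blast
  then obtain z where "z \<in> dom p" "leX w z" "u = the (p z)"
    using assms(1) w(1,4) unfolding pos_pmor_def by blast
  then show "\<exists>z\<in>dom p. leX w z \<and> the (p z) \<in> U \<and> the (p z) \<notin> V" using w(2,3) by blast
qed

lemma Up_p_neg:
  assumes neg: "neg_pmor X leX Y leY p" and U: "U \<in> upsets Y leY"
  shows "Up_p (up_imp Y leY U {}) = up_imp X leX (Up_p U) {}"
proof -
  have "Up_p {} = {}" using neg Up_p_empty unfolding neg_pmor_def by blast
  moreover have "up_imp X leX (Up_p U) (Up_p {}) \<subseteq> Up_p (up_imp Y leY U {})"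
  proof (rule up_imp_Up_p_subset[OF U])
    fix w u assume w: "w \<in> dom p" "u \<in> U" "u \<notin> {}" "leY (the (p w)) u"
    then obtain z where z: "z \<in> dom p" "leX w z" "leY u (the (p z))"
      using neg p_SomeD U unfolding neg_pmor_def mem_upsets_iff by blast
    then have "the (p z) \<in> U" using U w(2) p_SomeD unfolding mem_upsets_iff by auto
    then show "\<exists>z\<in>dom p. leX w z \<and> the (p z) \<in> U \<and> the (p z) \<notin> {}" using z by blast
  qed
  ultimately show ?thesis using Up_p_up_imp_subset[of U "{}"] by auto
qed

lemma inj_on_Up_p:
  assumes "ran p = Y"
  shows "inj_on Up_p (upsets Y leY)"
proof -
  have "Up_p U \<noteq> Up_p V" if U: "U \<in> upsets Y leY" and y: "y \<in> U" "y \<notin> V" for U V y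
  proof -
    have "y \<in> ran p" using U y(1) assms unfolding mem_upsets_iff by blast
    then obtain x where x: "p x = Some y" unfolding ran_def by blast
    have "x \<in> Up_p U" using Up_p_memI[OF U x y(1)] .
    moreover have "x \<notin> Up_p V" using x y(2) leX_refl p_SomeD unfolding mem_Up_p_iff by blast
    ultimately show ?thesis by blast
  qed
  then show ?thesis unfolding inj_on_def by blast
qed

end

lemma in_Kdual_order_pres: "in_Kdual K X leX Y leY p \<Longrightarrow> order_pres X leX Y leY p"
  unfolding in_Kdual_def neg_pmor_def pos_pmor_def by (cases K) auto

lemma hom_K_Up_map:
  assumes X: "poset X leX" and Y: "poset Y leY" and p: "in_Kdual K X leX Y leY p"
  shows "hom_K K (Up_alg Y leY) (Up_alg X leX) (Up_map X leX Y p)"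
proof -
  interpret monotone_partial_map X leX Y leY p
    using X Y in_Kdual_order_pres[OF p] by unfold_locales
  have neg: "has_bot K \<Longrightarrow> neg_pmor X leX Y leY p"
    and pos: "has_imp K \<Longrightarrow> pos_pmor X leX Y leY p"
    and almost_total: "has_join K \<Longrightarrow> almost_total X leX p"
    using p unfolding in_Kdual_iff by blast+
  have "has_neg K \<Longrightarrow> has_bot K" unfolding has_neg_def has_bot_def by auto
  then show ?thesis
    unfolding hom_K_def Up_alg_def alg.simps
    using Up_p_upset Up_p_top Up_p_Int Up_p_Un[OF almost_total] Up_p_up_imp[OF pos]
      Up_p_neg[OF neg] Up_p_empty neg unfolding neg_pmor_def by auto
qed

theorem proposition3p5:
  fixes K :: variety
    and A :: "'a alg" and B :: "'b alg"
    and X :: "'x set" and leX :: "'x \<Rightarrow> 'x \<Rightarrow> bool"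
    and Y :: "'y set" and leY :: "'y \<Rightarrow> 'y \<Rightarrow> bool"
  assumes "in_K K A" and "in_K K B"
    and "poset X leX" and "poset Y leY"
  shows "(\<forall>f. hom_K K A B f \<longrightarrow>
            in_Kdual K (dual_set B) (\<subseteq>) (dual_set A) (\<subseteq>) (fstar A B f) \<and>
            (inj_on f (acar A) \<longrightarrow> ran (fstar A B f) = dual_set A))
       \<and> (\<forall>p. in_Kdual K X leX Y leY p \<longrightarrow>
            hom_K K (Up_alg Y leY) (Up_alg X leX) (Up_map X leX Y p) \<and>
            (ran p = Y \<longrightarrow> inj_on (Up_map X leX Y p) (acar (Up_alg Y leY))))"
proof (intro conjI allI impI)
  fix f assume f: "hom_K K A B f"
  show "in_Kdual K (dual_set B) (\<subseteq>) (dual_set A) (\<subseteq>) (fstar A B f)"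
    using assms(1,2) f by (rule fstar_in_Kdual)
  show "ran (fstar A B f) = dual_set A" if "inj_on f (acar A)"
    using meet_semilattice_hom.ran_fstar_eq[OF hom_K_meet_semilattice_hom[OF assms(1,2) f] that] .
next
  fix p assume p: "in_Kdual K X leX Y leY p"
  show "hom_K K (Up_alg Y leY) (Up_alg X leX) (Up_map X leX Y p)"
    using assms(3,4) p by (rule hom_K_Up_map)
  show "inj_on (Up_map X leX Y p) (acar (Up_alg Y leY))" if "ran p = Y"
    using monotone_partial_map.inj_on_Up_p[OF _ that] assms(3,4) in_Kdual_order_pres[OF p]
    unfolding monotone_partial_map_def Up_alg_def by simp
qed

end
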